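(* Fix a threshold $R\in(0,1)$ and a receiver type $i\in[-1/2,1/2]$. Then: (i) the receiver of type $i$ accepts the buy recommendation if and only if he accepts the don't-buy recommendation; (ii) the receiver of type $i$ accepts the recommendation (equivalently, by (i), the buy recommendation) if and only if $\Delta_O^B\ge i\,\Delta_S^B$.
   Context: Setting. Consumer types are $i\in[-1/2,1/2]$, distributed according to a continuous cumulative distribution function $F$ with full support on $[-1/2,1/2]$. A product has a quality vector $(Q_1,Q_2)\in\{0,1\}^2$; a type-$i$ consumer gets payoff $(1/2+i)Q_1+(1/2-i)Q_2$ from it. The versions $(1,1),(1,0),(0,1),(0,0)$ have prior probabilities $q_H,q_1,q_2,q_L$ respectively, all strictly positive and summing to $1$. One product carries a recommendation from a sender whose type is drawn from $F$ independently of the product; given a threshold $R\in(0,1)$, the sender gives a buy recommendation $B$ if her payoff from the product is at least $R$ and a don't-buy recommendation $D$ otherwise. Let $\phi_1(R)=1-F(R-1/2)$, $\phi_2(R)=F(1/2-R)$, $\pi^B=q_H+q_1\phi_1(R)+q_2\phi_2(R)$ and $\pi^D=1-\pi^B$. The receiver's Bayesian posteriors over $(1,1),(1,0),(0,1),(0,0)$ are $p^B_H=q_H/\pi^B$, $p^B_1=q_1\phi_1(R)/\pi^B$, $p^B_2=q_2\phi_2(R)/\pi^B$, $p^B_L=0$ after $B$, and $p^D_H=0$, $p^D_1=q_1(1-\phi_1(R))/\pi^D$, $p^D_2=q_2(1-\phi_2(R))/\pi^D$, $p^D_L=q_L/\pi^D$ after $D$. For $r\in\{B,D\}$ let $U_i^r=p_H^r+(1/2+i)p_1^r+(1/2-i)p_2^r$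 (expected payoff of type $i$ from the recommended product) and $U_i^0=q_H+(1/2+i)q_1+(1/2-i)q_2$ (expected payoff from an alternative product without a recommendation). A receiver of type $i$ accepts the buy recommendation if $U_i^B\ge U_i^0$, and accepts the don't-buy recommendation if $U_i^0\ge U_i^D$. The objective and subjective effects of a recommendation $r\in\{B,D\}$ are $\Delta_O^r=p_H^r-q_H+\frac{p_1^r-q_1}{2}+\frac{p_2^r-q_2}{2}$ and $\Delta_S^r=(p_2^r-q_2)-(p_1^r-q_1)$. *)

theory Defs
  imports "HOL-Analysis.Analysis"
begin

definition is_cont_cdf_full_support :: "(real \<Rightarrow> real) \<Rightarrow> bool" where
  "is_cont_cdf_full_support F \<longleftrightarrow>
     continuous_on UNIV F \<and> mono F \<and>
     (\<forall>x. x \<le> -1/2 \<longrightarrow> F x = 0) \<and> (\<forall>x. x \<ge> 1/2 \<longrightarrow> F x = 1) \<and>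
     strict_mono_on {-1/2..1/2} F"

definition phi1 :: "(real \<Rightarrow> real) \<Rightarrow> real \<Rightarrow> real" where
  "phi1 F R = 1 - F (R - 1/2)"

definition phi2 :: "(real \<Rightarrow> real) \<Rightarrow> real \<Rightarrow> real" where
  "phi2 F R = F (1/2 - R)"

definition piB :: "(real \<Rightarrow> real) \<Rightarrow> real \<Rightarrow> real \<Rightarrow> real \<Rightarrow> real \<Rightarrow> real" where
  "piB F qH q1 q2 R = qH + q1 * phi1 F R + q2 * phi2 F R"

definition piD :: "(real \<Rightarrow> real) \<Rightarrow> real \<Rightarrow> real \<Rightarrow> real \<Rightarrow> real \<Rightarrow> real" where
  "piD F qH q1 q2 R = 1 - piB F qH q1 q2 R"

text \<open>Posteriors after B: (pH, p1, p2) (pL = 0).\<close>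
definition pB_H where "pB_H F qH q1 q2 R = qH / piB F qH q1 q2 R"
definition pB_1 where "pB_1 F qH q1 q2 R = q1 * phi1 F R / piB F qH q1 q2 R"
definition pB_2 where "pB_2 F qH q1 q2 R = q2 * phi2 F R / piB F qH q1 q2 R"

definition pD_H :: "(real \<Rightarrow> real) \<Rightarrow> real \<Rightarrow> real \<Rightarrow> real \<Rightarrow> real \<Rightarrow> real" where
  "pD_H F qH q1 q2 R = 0"
definition pD_1 where "pD_1 F qH q1 q2 R = q1 * (1 - phi1 F R) / piD F qH q1 q2 R"
definition pD_2 where "pD_2 F qH q1 q2 R = q2 * (1 - phi2 F R) / piD F qH q1 q2 R"

definition U0 :: "real \<Rightarrow> real \<Rightarrow> real \<Rightarrow> real \<Rightarrow> real" where
  "U0 qH q1 q2 i = qH + (1/2 + i) * q1 + (1/2 - i) * q2"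

definition UB where
  "UB F qH q1 q2 R i = pB_H F qH q1 q2 R + (1/2 + i) * pB_1 F qH q1 q2 R
                        + (1/2 - i) * pB_2 F qH q1 q2 R"
definition UD where
  "UD F qH q1 q2 R i = pD_H F qH q1 q2 R + (1/2 + i) * pD_1 F qH q1 q2 R
                        + (1/2 - i) * pD_2 F qH q1 q2 R"

definition accepts_B where "accepts_B F qH q1 q2 R i \<longleftrightarrow> UB F qH q1 q2 R i \<ge> U0 qH q1 q2 i"
definition accepts_D where "accepts_D F qH q1 q2 R i \<longleftrightarrow> U0 qH q1 q2 i \<ge> UD F qH q1 q2 R i"

definition DeltaO_B where
  "DeltaO_B F qH q1 q2 R = pB_H F qH q1 q2 R - qH + (pB_1 F qH q1 q2 R - q1) / 2
                           + (pB_2 F qH q1 q2 R - q2) / 2"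
definition DeltaS_B where
  "DeltaS_B F qH q1 q2 R = (pB_2 F qH q1 q2 R - q2) - (pB_1 F qH q1 q2 R - q1)"

end

theory Submission
  imports Defs
begin

text \<open>
  The prior is the average of the posteriors: \<open>U\<^sub>i\<^sup>0 = \<pi>\<^sup>B U\<^sub>i\<^sup>B + \<pi>\<^sup>D U\<^sub>i\<^sup>D\<close>.
  Full support of \<open>F\<close> makes both signals occur with positive probability, so
  \<open>U\<^sub>i\<^sup>0\<close> is a proper convex combination of \<open>U\<^sub>i\<^sup>B\<close> and \<open>U\<^sub>i\<^sup>D\<close>; hence it lies
  below the one exactly when it lies above the other, which is (i).
  Part (ii) is the identity \<open>U\<^sub>i\<^sup>B - U\<^sub>i\<^sup>0 = \<Delta>\<^sub>O\<^sup>B - i \<Delta>\<^sub>S\<^sup>B\<close>.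
\<close>

lemma convex_combination_le_iff:
  fixes p x y :: real
  assumes "0 < p" "p < 1"
  shows "p * x + (1 - p) * y \<le> x \<longleftrightarrow> y \<le> p * x + (1 - p) * y"
proof -
  have "p * x + (1 - p) * y \<le> x \<longleftrightarrow> (1 - p) * y \<le> (1 - p) * x"
    by (simp add: algebra_simps)
  also have "\<dots> \<longleftrightarrow> p * y \<le> p * x"
    using assms by simp
  also have "\<dots> \<longleftrightarrow> y \<le> p * x + (1 - p) * y"
    by (simp add: algebra_simps)
  finally show ?thesis .
qed

lemma cont_cdf_full_support_interior_bounds:
  assumes "is_cont_cdf_full_support F" "-1/2 < x" "x < 1/2"
  shows "0 < F x" "F x < 1"
proof -
  have mono: "strict_mono_on {-1/2..1/2} F" and "F (-1/2) = 0" "F (1/2) = 1"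
    using assms(1) unfolding is_cont_cdf_full_support_def by auto
  moreover have "F (-1/2) < F x" "F x < F (1/2)"
    using mono assms(2,3) by (auto simp: strict_mono_on_def)
  ultimately show "0 < F x" "F x < 1"
    by simp_all
qed

lemma phi1_bounds:
  assumes "is_cont_cdf_full_support F" "0 < R" "R < 1"
  shows "0 < phi1 F R" "phi1 F R < 1"
  using cont_cdf_full_support_interior_bounds[OF assms(1), of "R - 1/2"] assms(2,3)
  by (simp_all add: phi1_def)

lemma phi2_bounds:
  assumes "is_cont_cdf_full_support F" "0 < R" "R < 1"
  shows "0 < phi2 F R" "phi2 F R < 1"
  using cont_cdf_full_support_interior_bounds[OF assms(1), of "1/2 - R"] assms(2,3)
  by (simp_all add: phi2_def)

lemma piB_bounds:
  assumes "is_cont_cdf_full_support F" "0 < R" "R < 1"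
    and "qH > 0" "q1 > 0" "q2 > 0" "qL > 0" "qH + q1 + q2 + qL = 1"
  shows "0 < piB F qH q1 q2 R" "piB F qH q1 q2 R < 1"
proof -
  have "0 < phi1 F R" "0 < phi2 F R"
    using phi1_bounds[OF assms(1-3)] phi2_bounds[OF assms(1-3)] by simp_all
  then show "0 < piB F qH q1 q2 R"
    using assms(4-6) by (simp add: piB_def add_pos_pos)
  have "q1 * phi1 F R < q1" "q2 * phi2 F R < q2"
    using phi1_bounds[OF assms(1-3)] phi2_bounds[OF assms(1-3)] assms(5,6) by simp_all
  then show "piB F qH q1 q2 R < 1"
    using assms(7,8) by (simp add: piB_def)
qed

lemma U0_eq_average_of_posteriors:
  assumes "piB F qH q1 q2 R \<noteq> 0" "piB F qH q1 q2 R \<noteq> 1"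
  shows "U0 qH q1 q2 i =
    piB F qH q1 q2 R * UB F qH q1 q2 R i + (1 - piB F qH q1 q2 R) * UD F qH q1 q2 R i"
proof -
  define P where "P = piB F qH q1 q2 R"
  have "P * UB F qH q1 q2 R i =
      qH + (1/2 + i) * (q1 * phi1 F R) + (1/2 - i) * (q2 * phi2 F R)"
    using assms(1) unfolding P_def UB_def pB_H_def pB_1_def pB_2_def
    by (simp add: field_simps)
  moreover have "(1 - P) * UD F qH q1 q2 R i =
      (1/2 + i) * (q1 * (1 - phi1 F R)) + (1/2 - i) * (q2 * (1 - phi2 F R))"
  proof -
    have "1 - P \<noteq> 0"
      using assms(2) unfolding P_def by simp
    moreover have "UD F qH q1 q2 R i =
        ((1/2 + i) * (q1 * (1 - phi1 F R)) + (1/2 - i) * (q2 * (1 - phi2 F R))) / (1 - P)"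
      unfolding P_def UD_def pD_H_def pD_1_def pD_2_def piD_def
      by (simp add: add_divide_distrib)
    ultimately show ?thesis
      by simp
  qed
  ultimately show ?thesis
    unfolding P_def[symmetric] U0_def by (simp add: algebra_simps)
qed

lemma UB_minus_U0_eq:
  "UB F qH q1 q2 R i - U0 qH q1 q2 i = DeltaO_B F qH q1 q2 R - i * DeltaS_B F qH q1 q2 R"
  unfolding UB_def U0_def DeltaO_B_def DeltaS_B_def by (simp add: field_simps)

lemma accepts_B_iff_accepts_D:
  assumes "0 < piB F qH q1 q2 R" "piB F qH q1 q2 R < 1"
  shows "accepts_B F qH q1 q2 R i \<longleftrightarrow> accepts_D F qH q1 q2 R i"
  using convex_combination_le_iff[OF assms, of "UB F qH q1 q2 R i" "UD F qH q1 q2 R i"]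
    U0_eq_average_of_posteriors[of F qH q1 q2 R i] assms
  by (simp add: accepts_B_def accepts_D_def)

lemma accepts_B_iff_DeltaO_B_ge:
  "accepts_B F qH q1 q2 R i \<longleftrightarrow> DeltaO_B F qH q1 q2 R \<ge> i * DeltaS_B F qH q1 q2 R"
  using UB_minus_U0_eq[of F qH q1 q2 R i] unfolding accepts_B_def by linarith

theorem proposition1:
  fixes F :: "real \<Rightarrow> real" and qH q1 q2 qL R i :: real
  assumes "is_cont_cdf_full_support F"
    and "qH > 0" "q1 > 0" "q2 > 0" "qL > 0" "qH + q1 + q2 + qL = 1"
    and "0 < R" "R < 1"
    and "-1/2 \<le> i" "i \<le> 1/2"
  shows "(accepts_B F qH q1 q2 R i \<longleftrightarrow> accepts_D F qH q1 q2 R i)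
       \<and> (accepts_B F qH q1 q2 R i \<longleftrightarrow> DeltaO_B F qH q1 q2 R \<ge> i * DeltaS_B F qH q1 q2 R)"
proof -
  have "0 < piB F qH q1 q2 R" "piB F qH q1 q2 R < 1"
    using piB_bounds[OF assms(1,7,8,2-6)] by simp_all
  then show ?thesis
    using accepts_B_iff_accepts_D accepts_B_iff_DeltaO_B_ge by blast
qed

end
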